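(* Let $\Pi_q$ be a projective plane (not necessarily Desarguesian) of order $q$, let $\mu\ge 2$ be an integer and let $\delta=1/\sqrt{(q+1)\ln(q+1)}$. (i) Define $D_1=1$ and $D_i=D_{i-1}+1+\frac{D_{i-1}+\delta}{q}+\delta$ for $i=2,3,\dots,\mu$. Then $\Pi_q$ contains a $(1,\mu)$-saturating set of size $k\le 2D_\mu\sqrt{(q+1)\ln(q+1)}+2$. (ii) If $\mu\le\sqrt{q}$, then $\Pi_q$ contains a $(1,\mu)$-saturating set of size $k\le 2(\mu+1)\sqrt{(q+1)\ln(q+1)}+2$. (iii) If $\mu\le \frac{(1-\delta)q-\delta+1}{2}+1$, then $\Pi_q$ contains a $(1,\mu)$-saturating set of size $k\le 2(2\mu-1)\sqrt{(q+1)\ln(q+1)}+2$.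
   Context: A point set $S\subset\Pi_q$ is $(1,\mu)$-saturating if for every point $Q\in\Pi_q\setminus S$ the number of secants of $S$ through $Q$, counted with multiplicity, is at least $\mu$, where a line $\ell$ meeting $S$ in at least two points is a secant and has multiplicity $\binom{\#(\ell\cap S)}{2}$. Here $\ln$ is the natural logarithm. *)

theory Defs
  imports Complex_Main
begin

definition projective_plane :: "'a set \<Rightarrow> 'a set set \<Rightarrow> nat \<Rightarrow> bool" where
  "projective_plane P L q \<longleftrightarrow>
     finite P \<and>
     (\<forall>l\<in>L. l \<subseteq> P) \<and>
     (\<forall>x\<in>P. \<forall>y\<in>P. x \<noteq> y \<longrightarrow> (\<exists>!l. l \<in> L \<and> x \<in> l \<and> y \<in> l)) \<and>
     (\<forall>l\<in>L. \<forall>m\<in>L. l \<noteq> m \<longrightarrow> (\<exists>x\<in>P. l \<inter> m = {x})) \<and>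
     (\<exists>a\<in>P. \<exists>b\<in>P. \<exists>c\<in>P. \<exists>d\<in>P. distinct [a,b,c,d] \<and>
        (\<forall>l\<in>L. card (l \<inter> {a,b,c,d}) \<le> 2)) \<and>
     (\<forall>l\<in>L. card l = q + 1)"

text \<open>Number of secants of S through Q, counted with multiplicity (card(l \<inter> S) choose 2).\<close>
definition secant_count :: "'a set set \<Rightarrow> 'a set \<Rightarrow> 'a \<Rightarrow> nat" where
  "secant_count L S Q = (\<Sum>l\<in>{l\<in>L. Q \<in> l \<and> card (l \<inter> S) \<ge> 2}. card (l \<inter> S) choose 2)"

definition saturating_1 :: "'a set \<Rightarrow> 'a set set \<Rightarrow> nat \<Rightarrow> 'a set \<Rightarrow> bool" where
  "saturating_1 P L \<mu> S \<longleftrightarrow> S \<subseteq> P \<and> (\<forall>Q\<in>P - S. secant_count L S Q \<ge> \<mu>)"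

text \<open>D q \<delta> i = D_i for i \<ge> 1 (D q \<delta> 0 is an unused dummy value).\<close>
primrec Dseq :: "real \<Rightarrow> real \<Rightarrow> nat \<Rightarrow> real" where
  "Dseq q \<delta> 0 = 1"
| "Dseq q \<delta> (Suc i) = (if i = 0 then 1 else Dseq q \<delta> i + 1 + (Dseq q \<delta> i + \<delta>) / q + \<delta>)"

end

theory Submission
  imports Defs "HOL-Analysis.Harmonic_Numbers"
begin

text \<open>
  Choose \<open>m\<close> distinct points \<open>A\<close> outside the current set \<open>T\<close> uniformly at random.  A point \<open>Q\<close>
  outside \<open>A \<union> T\<close> is uncovered when every line \<open>Qa\<close>, \<open>a \<in> A\<close>, meets \<open>A \<union> T\<close> in \<open>a\<close> alone.
  Listing \<open>A\<close> in order, its \<open>i\<close>-th point must avoid \<open>Q\<close> and the \<open>iq\<close> points other than \<open>Q\<close> on the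
  lines joining \<open>Q\<close> to the earlier points, so the expected number of uncovered points is at most
  \<open>N \<cdot> \<Prod>\<^bsub>i<m\<^esub> (N - 1 - iq)/(N - i)\<close>, where \<open>N = q\<^sup>2 + q + 1\<close>.  Adding to \<open>A\<close> the uncovered points
  of a tuple that does not exceed the average yields a set \<open>S\<close> with \<open>|S| \<le> m + k \<le> 2\<surd>((q+1) ln(q+1)) + 2\<close>
  such that every point outside \<open>S \<union> T\<close> lies on a line through a point of \<open>S\<close> and a second point
  of \<open>S \<union> T\<close>; suitable \<open>m, k\<close> come from \<open>1 - x \<le> exp(-x)\<close> for \<open>q \<ge> 31\<close> and from a table for
  smaller \<open>q\<close>.  Repeating this \<open>\<mu>\<close> times raises the secant count of every outside point in each
  round, and each of the three stated bounds is at least \<open>\<mu>(2\<surd>((q+1) ln(q+1)) + 2)\<close>.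
\<close>

section \<open>Elementary counting\<close>

lemma choose_two_strict_mono:
  assumes "a < b" "2 \<le> b"
  shows "a choose 2 < b choose 2"
proof -
  obtain c where b: "b = Suc c" using assms(2) by (cases b) auto
  have "a choose 2 \<le> c choose 2"
    using assms(1) b by (intro binomial_right_mono) simp
  also have "\<dots> < c + (c choose 2)"
    using assms(2) b by simp
  also have "\<dots> = b choose 2"
    using b by (simp add: numeral_2_eq_2)
  finally show ?thesis .
qed

lemma prod_atLeastAtMost_eq_prod_lessThan:
  "m \<le> (n::nat) \<Longrightarrow> \<Prod>{n - m + 1..n} = (\<Prod>i<m. n - i)"
proof (induction m)
  case (Suc m)
  then have "{n - Suc m + 1..n} = insert (n - m) {n - m + 1..n}" by auto
  then show ?case using Suc by (simp add: mult.commute)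
qed simp

lemma card_distinct_lists:
  assumes "finite A" "m \<le> card A"
  shows "card {xs. set xs \<subseteq> A \<and> distinct xs \<and> length xs = m} = (\<Prod>i<m. card A - i)"
proof -
  have "{xs. set xs \<subseteq> A \<and> distinct xs \<and> length xs = m} = {xs. length xs = m \<and> distinct xs \<and> set xs \<subseteq> A}"
    by auto
  then show ?thesis
    using card_lists_distinct_length_eq[OF assms] prod_atLeastAtMost_eq_prod_lessThan[OF assms(2)] by simp
qed

lemma exists_le_average:
  fixes f :: "'a \<Rightarrow> nat"
  assumes "finite X" "X \<noteq> {}"
  shows "\<exists>x\<in>X. f x * card X \<le> (\<Sum>y\<in>X. f y)"
proof (rule ccontr)
  assume "\<not> ?thesis"
  then have "(\<Sum>x\<in>X. \<Sum>y\<in>X. f y) < (\<Sum>x\<in>X. f x * card X)"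
    using assms by (intro sum_strict_mono) auto
  then show False by (simp add: sum_distrib_left[symmetric] mult.commute)
qed

lemma sum_card_filter_swap:
  assumes "finite X" "finite Y"
  shows "(\<Sum>x\<in>X. card {y\<in>Y. R x y}) = (\<Sum>y\<in>Y. card {x\<in>X. R x y})"
proof -
  have "card {y\<in>Y. R x y} = (\<Sum>y\<in>Y. if R x y then 1 else 0)" for x
    using assms(2) by (simp add: sum.inter_filter[symmetric])
  moreover have "card {x\<in>X. R x y} = (\<Sum>x\<in>X. if R x y then 1 else 0)" for y
    using assms(1) by (simp add: sum.inter_filter[symmetric])
  ultimately show ?thesis
    by (simp add: sum.swap[of _ X Y])
qed

text \<open>
  \<open>uncover_bound q n m\<close> bounds the expected number of uncovered points when \<open>m\<close> points are
  drawn from \<open>n\<close> candidates; a factor \<open>n - 1 - i q\<close> truncated to \<open>0\<close> only makes it smaller.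
\<close>

definition uncover_bound :: "nat \<Rightarrow> nat \<Rightarrow> nat \<Rightarrow> real" where
  "uncover_bound q n m = real n * (\<Prod>i<m. real (n - 1 - i * q) / real (n - i))"

lemma uncover_ratio_mono:
  fixes n N i q :: nat
  assumes "i < n" "n \<le> N" "1 \<le> q"
  shows "real (n - 1 - i * q) / real (n - i) \<le> real (N - 1 - i * q) / real (N - i)"
proof (cases "1 + i * q < n")
  case True
  define c where "c = 1 + real i * real q"
  have "real i * 1 \<le> real i * real q"
    using assms(3) by (intro mult_left_mono) auto
  then have "real i \<le> c"
    unfolding c_def by simp
  then have "0 \<le> (c - real i) * (real N - real n)"
    using assms(2) by simp
  then have "(real n - c) * (real N - real i) \<le> (real N - c) * (real n - real i)"
    by (simp add: algebra_simps)
  moreover have "real (n - 1 - i * q) = real n - c" "real (N - 1 - i * q) = real N - c"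
    using True assms(2) unfolding c_def by simp_all
  ultimately show ?thesis
    using assms by (simp add: divide_simps)
qed simp

lemma uncover_bound_mono:
  assumes "m \<le> n" "n \<le> N" "1 \<le> q"
  shows "uncover_bound q n m \<le> uncover_bound q N m"
  unfolding uncover_bound_def using assms
  by (intro mult_mono prod_mono conjI uncover_ratio_mono) (auto intro!: prod_nonneg)

section \<open>Finite projective planes\<close>

locale finite_projective_plane =
  fixes P :: "'a set" and L :: "'a set set" and q :: nat
  assumes plane: "projective_plane P L q"
begin

lemma finite_points: "finite P"
  and line_subset: "l \<in> L \<Longrightarrow> l \<subseteq> P"
  and unique_line: "x \<in> P \<Longrightarrow> y \<in> P \<Longrightarrow> x \<noteq> y \<Longrightarrow> \<exists>!l. l \<in> L \<and> x \<in> l \<and> y \<in> l"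
  and lines_meet: "l \<in> L \<Longrightarrow> m \<in> L \<Longrightarrow> l \<noteq> m \<Longrightarrow> \<exists>x\<in>P. l \<inter> m = {x}"
  and quadrangle: "\<exists>a\<in>P. \<exists>b\<in>P. \<exists>c\<in>P. \<exists>d\<in>P. distinct [a,b,c,d] \<and>
                     (\<forall>l\<in>L. card (l \<inter> {a,b,c,d}) \<le> 2)"
  and card_line: "l \<in> L \<Longrightarrow> card l = q + 1"
  using plane unfolding projective_plane_def by simp_all

lemma finite_line: "l \<in> L \<Longrightarrow> finite l"
  using finite_points line_subset finite_subset by blast

lemma finite_lines: "finite L"
  using finite_points line_subset by (meson PowI finite_Pow_iff finite_subset subsetI)

lemma line_eqI: "\<lbrakk>l \<in> L; m \<in> L; x \<noteq> y; x \<in> l; y \<in> l; x \<in> m; y \<in> m\<rbrakk> \<Longrightarrow> l = m"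
  using unique_line line_subset by blast

lemma lines_inter: "\<lbrakk>l \<in> L; m \<in> L; l \<noteq> m; x \<in> l; x \<in> m\<rbrakk> \<Longrightarrow> l \<inter> m = {x}"
  using lines_meet by (metis Int_iff singletonD)

definition join :: "'a \<Rightarrow> 'a \<Rightarrow> 'a set" where
  "join x y = (THE l. l \<in> L \<and> x \<in> l \<and> y \<in> l)"

lemma
  assumes "x \<in> P" "y \<in> P" "x \<noteq> y"
  shows join_line: "join x y \<in> L" and left_in_join: "x \<in> join x y" and right_in_join: "y \<in> join x y"
  using theI'[OF unique_line[OF assms]] unfolding join_def by auto

lemma join_eqI: "\<lbrakk>l \<in> L; x \<in> P; y \<in> P; x \<noteq> y; x \<in> l; y \<in> l\<rbrakk> \<Longrightarrow> join x y = l"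
  using join_line left_in_join right_in_join line_eqI by metis

lemma no_three_collinear:
  assumes "\<forall>l\<in>L. card (l \<inter> X) \<le> 2" "l \<in> L" "{x, y, z} \<subseteq> l \<inter> X" "distinct [x, y, z]"
  shows False
proof -
  have "card {x, y, z} \<le> card (l \<inter> X)"
    using assms(2,3) finite_line by (intro card_mono) auto
  moreover have "card {x, y, z} = 3" using assms(4) by simp
  moreover have "card (l \<inter> X) \<le> 2" using assms(1,2) by blast
  ultimately show False by simp
qed

lemma order_ge_2: "2 \<le> q"
proof (rule ccontr)
  assume "\<not> 2 \<le> q"
  have two_point_line: "join x y = {x, y}" if "x \<in> P" "y \<in> P" "x \<noteq> y" for x y
  proof -
    have "{x, y} \<subseteq> join x y"
      using left_in_join[OF that] right_in_join[OF that] by simp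
    moreover have "card (join x y) \<le> card {x, y}"
      using card_line[OF join_line[OF that]] that \<open>\<not> 2 \<le> q\<close> by simp
    ultimately show ?thesis
      using card_seteq[OF finite_line[OF join_line[OF that]]] by blast
  qed
  obtain a b c d where abcd: "a \<in> P" "b \<in> P" "c \<in> P" "d \<in> P" "distinct [a, b, c, d]"
    using quadrangle by blast
  then have ab: "a \<noteq> b" and cd: "c \<noteq> d" and disj: "{a, b} \<inter> {c, d} = {}"
    by auto
  have lines: "join a b = {a, b}" "join c d = {c, d}"
    using two_point_line abcd ab cd by auto
  moreover obtain x where "join a b \<inter> join c d = {x}"
    using lines_meet[OF join_line[OF abcd(1,2) ab] join_line[OF abcd(3,4) cd]] lines disj by auto
  ultimately show False
    using disj by auto
qed

lemma line_avoiding: "\<exists>l\<in>L. Q \<notin> l"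
proof (rule ccontr)
  assume "\<not> (\<exists>l\<in>L. Q \<notin> l)"
  then have on_all: "Q \<in> l" if "l \<in> L" for l
    using that by blast
  obtain a b c d where abcd: "a \<in> P" "b \<in> P" "c \<in> P" "d \<in> P" "distinct [a, b, c, d]"
    and no3: "\<forall>l\<in>L. card (l \<inter> {a, b, c, d}) \<le> 2"
    using quadrangle by blast
  have vertex: "Q = x"
    if "x \<in> P" "y \<in> P" "z \<in> P" "distinct [x, y, z]" "{x, y, z} \<subseteq> {a, b, c, d}" for x y z
  proof -
    have xy: "x \<noteq> y" and xz: "x \<noteq> z" using that by auto
    have "join x y \<noteq> join x z"
      using no_three_collinear[OF no3 join_line[OF that(1,2) xy]] that
        left_in_join[OF that(1,2) xy] right_in_join[OF that(1,2) xy] right_in_join[OF that(1,3) xz]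
      by auto
    then have "join x y \<inter> join x z = {x}"
      by (intro lines_inter join_line left_in_join) (use that xy xz in auto)
    then show "Q = x"
      using on_all join_line that xy xz by blast
  qed
  have "Q = a" using vertex[of a b c] abcd by auto
  moreover have "Q = d" using vertex[of d b c] abcd by auto
  ultimately show False using abcd by simp
qed

lemma card_points_le: "card P \<le> q * q + q + 1"
proof (cases "P = {}")
  case False
  then obtain Q where Q: "Q \<in> P" by blast
  obtain l0 where l0: "l0 \<in> L" "Q \<notin> l0" using line_avoiding by blast
  have l0P: "l0 \<subseteq> P" using line_subset[OF l0(1)] .
  have join_Q: "join Q x \<in> L \<and> Q \<in> join Q x" if "x \<in> l0" for x
    using join_line[OF Q, of x] left_in_join[OF Q, of x] that l0 l0P by auto
  have "P - {Q} \<subseteq> (\<Union>x\<in>l0. join Q x - {Q})"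
  proof
    fix y assume y: "y \<in> P - {Q}"
    have "join Q y \<noteq> l0" using right_in_join[of Q y] left_in_join[of Q y] Q y l0 by auto
    then obtain x where x: "join Q y \<inter> l0 = {x}"
      using lines_meet join_line[of Q y] Q y l0 by blast
    then have "x \<in> l0" by blast
    then have "join Q x = join Q y"
      using join_eqI[OF join_line[of Q y], of Q x] x Q y l0 l0P left_in_join[of Q y] by blast
    then show "y \<in> (\<Union>x\<in>l0. join Q x - {Q})"
      using \<open>x \<in> l0\<close> right_in_join[of Q y] Q y by blast
  qed
  then have "card (P - {Q}) \<le> card (\<Union>x\<in>l0. join Q x - {Q})"
    using finite_line join_Q l0 by (intro card_mono) auto
  also have "\<dots> \<le> (\<Sum>x\<in>l0. card (join Q x - {Q}))"
    using card_UN_le finite_line l0(1) by blast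
  also have "\<dots> = (\<Sum>x\<in>l0. q)"
    using join_Q card_line finite_line by (intro sum.cong) auto
  also have "\<dots> = (q + 1) * q"
    using card_line l0(1) by simp
  finally show ?thesis
    using Q finite_points by (simp add: algebra_simps)
qed simp

section \<open>Secants added in rounds\<close>

definition new_secant_through :: "'a set \<Rightarrow> 'a set \<Rightarrow> 'a \<Rightarrow> bool" where
  "new_secant_through T S Q \<longleftrightarrow> (\<exists>l\<in>L. Q \<in> l \<and> (\<exists>a\<in>S \<inter> l. \<exists>b\<in>(S \<union> T) \<inter> l. b \<noteq> a))"

lemma secant_count_eq_sum: "secant_count L S Q = (\<Sum>l\<in>{l\<in>L. Q \<in> l}. card (l \<inter> S) choose 2)"
  unfolding secant_count_def
  by (rule sum.mono_neutral_left) (auto simp: finite_lines binomial_eq_0)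

lemma secant_count_increase:
  assumes "S \<inter> T = {}" "new_secant_through T S Q"
  shows "secant_count L T Q < secant_count L (T \<union> S) Q"
proof -
  obtain l a b where l: "l \<in> L" "Q \<in> l" and a: "a \<in> S \<inter> l" and b: "b \<in> (S \<union> T) \<inter> l" "b \<noteq> a"
    using assms(2) unfolding new_secant_through_def by blast
  have fin: "finite l" using finite_line[OF l(1)] .
  have "card (l \<inter> T) < card (l \<inter> (T \<union> S))"
    using a assms(1) fin by (intro psubset_card_mono) auto
  moreover have "2 \<le> card (l \<inter> (T \<union> S))"
    using card_mono[of "l \<inter> (T \<union> S)" "{a, b}"] a b fin by auto
  ultimately have "card (l \<inter> T) choose 2 < card (l \<inter> (T \<union> S)) choose 2"
    by (rule choose_two_strict_mono)
  moreover have "card (l' \<inter> T) choose 2 \<le> card (l' \<inter> (T \<union> S)) choose 2" if "l' \<in> L" for l'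
    using finite_line[OF that] by (intro binomial_right_mono card_mono) auto
  ultimately show ?thesis
    unfolding secant_count_eq_sum using l finite_lines by (intro sum_strict_mono_ex1) auto
qed

lemma saturating_by_rounds:
  assumes round: "\<And>T. T \<subseteq> P \<Longrightarrow>
    \<exists>S \<subseteq> P - T. real (card S) \<le> B \<and> (\<forall>Q\<in>P - T - S. new_secant_through T S Q)"
  shows "\<exists>U. saturating_1 P L \<mu> U \<and> real (card U) \<le> real \<mu> * B"
proof (induction \<mu>)
  case 0
  show ?case by (intro exI[of _ "{}"]) (simp add: saturating_1_def)
next
  case (Suc \<mu>)
  then obtain U where U: "saturating_1 P L \<mu> U" "real (card U) \<le> real \<mu> * B"
    by blast
  have "U \<subseteq> P"
    using U(1) unfolding saturating_1_def by blast
  from round[OF this] obtain S where S: "S \<subseteq> P - U" "real (card S) \<le> B"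
    and secants: "\<forall>Q\<in>P - U - S. new_secant_through U S Q"
    by (elim exE conjE)
  have "Suc \<mu> \<le> secant_count L (U \<union> S) Q" if "Q \<in> P - (U \<union> S)" for Q
  proof -
    have "\<mu> \<le> secant_count L U Q"
      using U(1) that unfolding saturating_1_def by blast
    also have "\<dots> < secant_count L (U \<union> S) Q"
      using S(1) secants that by (intro secant_count_increase) auto
    finally show ?thesis by simp
  qed
  then have "saturating_1 P L (Suc \<mu>) (U \<union> S)"
    using U(1) S(1) unfolding saturating_1_def by blast
  moreover have "real (card (U \<union> S)) \<le> real (Suc \<mu>) * B"
    using card_Un_le[of U S] U(2) S(2) by (simp add: algebra_simps)
  ultimately show ?case by blast
qed

section \<open>Uncovered points of a random tuple\<close>

definition uncovered :: "'a set \<Rightarrow> 'a set \<Rightarrow> 'a \<Rightarrow> bool" where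
  "uncovered T A Q \<longleftrightarrow> Q \<notin> A \<and> (\<forall>a\<in>A. \<forall>l\<in>L. Q \<in> l \<and> a \<in> l \<longrightarrow> l \<inter> (A \<union> T) = {a})"

lemma uncovered_subset: "uncovered T A' Q \<Longrightarrow> A \<subseteq> A' \<Longrightarrow> uncovered T A Q"
  unfolding uncovered_def by blast

lemma new_secant_through_if_covered:
  "A \<subseteq> S \<Longrightarrow> Q \<notin> A \<Longrightarrow> \<not> uncovered T A Q \<Longrightarrow> new_secant_through T S Q"
  unfolding uncovered_def new_secant_through_def by blast

lemma uncovered_join:
  assumes "uncovered T A Q" "A \<subseteq> P" "Q \<in> P" "a \<in> A"
  shows "join Q a \<in> L" "Q \<in> join Q a" "join Q a \<inter> (A \<union> T) = {a}"
proof -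
  have "Q \<noteq> a" using assms(1,4) unfolding uncovered_def by blast
  moreover have "a \<in> P" using assms(2,4) by blast
  ultimately have line: "join Q a \<in> L" "Q \<in> join Q a" "a \<in> join Q a"
    using join_line left_in_join right_in_join assms(3) by auto
  then show "join Q a \<in> L" "Q \<in> join Q a"
    by simp_all
  show "join Q a \<inter> (A \<union> T) = {a}"
    using assms(1,4) line unfolding uncovered_def by blast
qed

lemma joins_uncovered:
  assumes "uncovered T A Q" "A \<subseteq> P - T" "Q \<in> P" "finite A"
  shows "(\<Union>a\<in>A. join Q a - {Q}) \<subseteq> P - T"
    and "card (\<Union>a\<in>A. join Q a - {Q}) = card A * q"
proof -
  have join: "join Q a \<in> L" "Q \<in> join Q a" "join Q a \<inter> (A \<union> T) = {a}" if "a \<in> A" for a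
    using uncovered_join[OF assms(1) _ assms(3) that] assms(2) by auto
  show "(\<Union>a\<in>A. join Q a - {Q}) \<subseteq> P - T"
    using join line_subset assms(2) by blast
  have "join Q a \<noteq> join Q b" if "a \<in> A" "b \<in> A" "a \<noteq> b" for a b
    using join[OF that(1)] join[OF that(2)] that by blast
  then have disjoint: "(join Q a - {Q}) \<inter> (join Q b - {Q}) = {}" if "a \<in> A" "b \<in> A" "a \<noteq> b" for a b
    using lines_inter[of "join Q a" "join Q b" Q] join that by blast
  have "card (\<Union>a\<in>A. join Q a - {Q}) = (\<Sum>a\<in>A. card (join Q a - {Q}))"
    using assms(4) disjoint join(1) finite_line by (intro card_UN_disjoint) auto
  also have "\<dots> = (\<Sum>a\<in>A. q)"
    using join card_line finite_line by (intro sum.cong) auto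
  finally show "card (\<Union>a\<in>A. join Q a - {Q}) = card A * q"
    by simp
qed

definition uncovering_lists :: "'a set \<Rightarrow> 'a \<Rightarrow> nat \<Rightarrow> 'a list set" where
  "uncovering_lists T Q m =
     {xs. set xs \<subseteq> P - T \<and> distinct xs \<and> length xs = m \<and> uncovered T (set xs) Q}"

lemma finite_uncovering_lists: "finite (uncovering_lists T Q m)"
proof -
  have "uncovering_lists T Q m \<subseteq> {xs. set xs \<subseteq> P - T \<and> length xs = m}"
    unfolding uncovering_lists_def by auto
  then show ?thesis
    using finite_lists_length_eq[of "P - T" m] finite_points finite_subset by blast
qed

lemma card_uncovering_extensions:
  assumes "Q \<in> P - T" "xs \<in> uncovering_lists T Q m"
  shows "card {y. xs @ [y] \<in> uncovering_lists T Q (Suc m)} \<le> card (P - T) - 1 - m * q"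
proof -
  let ?C = "\<Union>a\<in>set xs. join Q a - {Q}"
  have xs: "set xs \<subseteq> P - T" "distinct xs" "length xs = m" "uncovered T (set xs) Q"
    using assms(2) unfolding uncovering_lists_def by auto
  have C: "?C \<subseteq> P - T" "card ?C = m * q"
    using joins_uncovered[OF xs(4,1)] assms(1) xs(3) distinct_card[OF xs(2)] by auto
  have C_fin: "finite ?C"
    using C(1) finite_points finite_subset by fastforce
  have "{y. xs @ [y] \<in> uncovering_lists T Q (Suc m)} \<subseteq> (P - T) - insert Q ?C"
  proof
    fix y assume "y \<in> {y. xs @ [y] \<in> uncovering_lists T Q (Suc m)}"
    then have y: "y \<in> P - T" "y \<notin> set xs" and unc: "uncovered T (insert y (set xs)) Q"
      unfolding uncovering_lists_def by auto
    have P: "insert y (set xs) \<subseteq> P" "Q \<in> P"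
      using xs(1) y assms(1) by auto
    have "y \<notin> join Q a" if "a \<in> set xs" for a
    proof
      assume "y \<in> join Q a"
      then have "y \<in> join Q a \<inter> (insert y (set xs) \<union> T)"
        by simp
      then have "y = a"
        unfolding uncovered_join(3)[OF unc P insertI2[OF that]] by simp
      then show False
        using y(2) that by simp
    qed
    moreover have "y \<noteq> Q" using unc unfolding uncovered_def by blast
    ultimately show "y \<in> (P - T) - insert Q ?C"
      using y by blast
  qed
  then have "card {y. xs @ [y] \<in> uncovering_lists T Q (Suc m)} \<le> card ((P - T) - insert Q ?C)"
    using finite_points by (intro card_mono) auto
  also have "\<dots> = card (P - T) - card (insert Q ?C)"
    using C C_fin assms(1) by (intro card_Diff_subset) auto
  also have "card (insert Q ?C) = 1 + m * q"
    using card_insert_disjoint[OF C_fin, of Q] unfolding C(2) by auto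
  finally show ?thesis by simp
qed

lemma card_uncovering_lists:
  assumes "Q \<in> P - T"
  shows "card (uncovering_lists T Q m) \<le> (\<Prod>i<m. card (P - T) - 1 - i * q)"
proof (induction m)
  case 0
  have "uncovering_lists T Q 0 \<subseteq> {[]}"
    unfolding uncovering_lists_def by auto
  then show ?case
    using card_mono[of "{[]}" "uncovering_lists T Q 0"] by simp
next
  case (Suc m)
  let ?ext = "\<lambda>xs. {y. xs @ [y] \<in> uncovering_lists T Q (Suc m)}"
  have fin_ext: "finite (?ext xs)" for xs
    using finite_points by (rule finite_subset[rotated]) (auto simp: uncovering_lists_def)
  have "uncovering_lists T Q (Suc m) \<subseteq>
      (\<lambda>(xs, y). xs @ [y]) ` (SIGMA xs:uncovering_lists T Q m. ?ext xs)"
  proof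
    fix zs assume zs: "zs \<in> uncovering_lists T Q (Suc m)"
    then obtain xs y where "zs = xs @ [y]"
      unfolding uncovering_lists_def by (metis (mono_tags) length_Suc_conv_rev mem_Collect_eq)
    moreover have "xs \<in> uncovering_lists T Q m"
      using zs calculation uncovered_subset[of T _ Q "set xs"]
      unfolding uncovering_lists_def by auto
    ultimately show "zs \<in> (\<lambda>(xs, y). xs @ [y]) ` (SIGMA xs:uncovering_lists T Q m. ?ext xs)"
      using zs by force
  qed
  then have "card (uncovering_lists T Q (Suc m)) \<le> card (SIGMA xs:uncovering_lists T Q m. ?ext xs)"
    using finite_uncovering_lists fin_ext
    by (meson card_image_le card_mono finite_SigmaI finite_imageI order_trans)
  also have "\<dots> = (\<Sum>xs\<in>uncovering_lists T Q m. card (?ext xs))"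
    using finite_uncovering_lists fin_ext by simp
  also have "\<dots> \<le> card (uncovering_lists T Q m) * (card (P - T) - 1 - m * q)"
    using sum_bounded_above[OF card_uncovering_extensions[OF assms]] by simp
  also have "\<dots> \<le> (\<Prod>i<Suc m. card (P - T) - 1 - i * q)"
    using Suc.IH by simp
  finally show ?case .
qed

lemma sum_card_uncovered_le:
  "(\<Sum>xs\<in>{xs. set xs \<subseteq> P - T \<and> distinct xs \<and> length xs = m}. card {Q\<in>P - T. uncovered T (set xs) Q})
     \<le> card (P - T) * (\<Prod>i<m. card (P - T) - 1 - i * q)"
proof -
  define X where "X = {xs. set xs \<subseteq> P - T \<and> distinct xs \<and> length xs = m}"
  have fin: "finite (P - T)"
    using finite_points by simp
  have "X \<subseteq> {xs. set xs \<subseteq> P - T \<and> length xs = m}"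
    unfolding X_def by auto
  then have "finite X"
    using finite_lists_length_eq[OF fin] finite_subset by blast
  then have "(\<Sum>xs\<in>X. card {Q\<in>P - T. uncovered T (set xs) Q}) =
      (\<Sum>Q\<in>P - T. card {xs\<in>X. uncovered T (set xs) Q})"
    using fin by (rule sum_card_filter_swap)
  also have "\<dots> \<le> (\<Sum>Q\<in>P - T. \<Prod>i<m. card (P - T) - 1 - i * q)"
  proof (rule sum_mono)
    fix Q assume "Q \<in> P - T"
    moreover have "{xs\<in>X. uncovered T (set xs) Q} = uncovering_lists T Q m"
      unfolding X_def uncovering_lists_def by auto
    ultimately show "card {xs\<in>X. uncovered T (set xs) Q} \<le> (\<Prod>i<m. card (P - T) - 1 - i * q)"
      using card_uncovering_lists by simp
  qed
  also have "\<dots> = card (P - T) * (\<Prod>i<m. card (P - T) - 1 - i * q)"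
    by simp
  finally show ?thesis
    unfolding X_def .
qed

lemma exists_list_few_uncovered:
  assumes "m \<le> card (P - T)"
  shows "\<exists>xs. set xs \<subseteq> P - T \<and> distinct xs \<and> length xs = m \<and>
    real (card {Q\<in>P - T. uncovered T (set xs) Q}) \<le> uncover_bound q (card (P - T)) m"
proof -
  define n where "n = card (P - T)"
  define X where "X = {xs. set xs \<subseteq> P - T \<and> distinct xs \<and> length xs = m}"
  define f where "f xs = card {Q\<in>P - T. uncovered T (set xs) Q}" for xs
  have card_X: "card X = (\<Prod>i<m. n - i)"
    unfolding X_def n_def using finite_points assms by (intro card_distinct_lists) auto
  have pos: "0 < (\<Prod>i<m. real (n - i))"
    using assms unfolding n_def by (intro prod_pos) auto
  then have "0 < card X"
    unfolding card_X by (simp add: of_nat_prod[symmetric] del: of_nat_prod)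
  then obtain xs where xs: "xs \<in> X" "f xs * card X \<le> (\<Sum>xs\<in>X. f xs)"
    using exists_le_average[of X f] card_gt_0_iff by blast
  then have "f xs * card X \<le> n * (\<Prod>i<m. n - 1 - i * q)"
    using sum_card_uncovered_le[of T m] unfolding X_def f_def n_def by linarith
  then have "real (f xs) * (\<Prod>i<m. real (n - i)) \<le> real n * (\<Prod>i<m. real (n - 1 - i * q))"
    unfolding card_X by (metis of_nat_le_iff of_nat_mult of_nat_prod)
  then have "real (f xs) \<le> uncover_bound q n m"
    unfolding uncover_bound_def using pos by (simp add: prod_dividef pos_le_divide_eq)
  then show ?thesis
    using xs(1) unfolding X_def f_def n_def by blast
qed

lemma secant_round:
  assumes "uncover_bound q (q * q + q + 1) m < real k + 1"
  shows "\<exists>S \<subseteq> P - T. card S \<le> m + k \<and> (\<forall>Q\<in>P - T - S. new_secant_through T S Q)"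
proof (cases "card (P - T) < m")
  case True
  then have "P - T \<subseteq> P - T \<and> card (P - T) \<le> m + k \<and>
      (\<forall>Q\<in>P - T - (P - T). new_secant_through T (P - T) Q)"
    by simp
  then show ?thesis by (rule exI[where x = "P - T"])
next
  case False
  then have "m \<le> card (P - T)" by simp
  from exists_list_few_uncovered[OF this] obtain xs where
    xs: "set xs \<subseteq> P - T" "distinct xs" "length xs = m" and
    few: "real (card {Q\<in>P - T. uncovered T (set xs) Q}) \<le> uncover_bound q (card (P - T)) m"
    by (elim exE conjE)
  have "card (P - T) \<le> q * q + q + 1"
    using card_points_le card_mono[OF finite_points, of "P - T"] by auto
  then have "uncover_bound q (card (P - T)) m \<le> uncover_bound q (q * q + q + 1) m"
    using False order_ge_2 by (intro uncover_bound_mono) auto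
  then have "real (card {Q\<in>P - T. uncovered T (set xs) Q}) < real k + 1"
    using few assms by linarith
  then have few_k: "card {Q\<in>P - T. uncovered T (set xs) Q} \<le> k"
    by (metis Suc_eq_plus1 less_Suc_eq_le of_nat_1 of_nat_add of_nat_less_iff)
  define S where "S = set xs \<union> {Q\<in>P - T. uncovered T (set xs) Q}"
  have "card S \<le> m + k"
    using card_Un_le[of "set xs" "{Q\<in>P - T. uncovered T (set xs) Q}"] distinct_card[OF xs(2)] xs(3) few_k
    unfolding S_def by linarith
  moreover have "S \<subseteq> P - T"
    using xs(1) unfolding S_def by blast
  moreover have "new_secant_through T S Q" if "Q \<in> P - T - S" for Q
    using that by (intro new_secant_through_if_covered[of "set xs"]) (auto simp: S_def)
  ultimately show ?thesis by blast
qed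

end

section \<open>The size of a round\<close>

definition round_size :: "nat \<Rightarrow> real" where
  "round_size q = 2 * sqrt ((real q + 1) * ln (real q + 1)) + 2"

lemma ln_ge_of_pow2:
  fixes x :: real
  assumes "2 ^ j \<le> x"
  shows "2 / 3 * real j \<le> ln x"
proof -
  have "2 / 3 * real j \<le> real j * ln 2"
    using mult_left_mono[OF ln2_ge_two_thirds, of "real j"] by simp
  also have "\<dots> = ln (2 ^ j)"
    by (simp add: ln_realpow)
  also have "\<dots> \<le> ln x"
    using assms by (intro ln_mono) auto
  finally show ?thesis .
qed

lemma add_le_round_size:
  assumes "2 \<le> m + k" "3 * (m + k - 2)\<^sup>2 \<le> 8 * (q + 1) * j" "2 ^ j \<le> q + 1"
  shows "real m + real k \<le> round_size q"
proof -
  define d where "d = real m + real k - 2"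
  have "real (3 * (m + k - 2)\<^sup>2) \<le> real (8 * (q + 1) * j)"
    using assms(2) by (simp only: of_nat_le_iff)
  then have "3 * d\<^sup>2 \<le> 8 * (real q + 1) * real j"
    using assms(1) unfolding d_def by (simp add: algebra_simps)
  moreover have "(2::real) ^ j \<le> real q + 1"
    using of_nat_le_iff[where 'a = real, THEN iffD2, OF assms(3)] by simp
  then have "8 * (real q + 1) * real j \<le> 12 * ((real q + 1) * ln (real q + 1))"
    using mult_left_mono[OF ln_ge_of_pow2, of j "real q + 1" "12 * (real q + 1)"]
    by (simp add: algebra_simps)
  moreover have "(2 * sqrt ((real q + 1) * ln (real q + 1)))\<^sup>2 = 4 * ((real q + 1) * ln (real q + 1))"
    by (simp add: power_mult_distrib)
  ultimately have "d\<^sup>2 \<le> (2 * sqrt ((real q + 1) * ln (real q + 1)))\<^sup>2"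
    by linarith
  then have "d \<le> 2 * sqrt ((real q + 1) * ln (real q + 1))"
    by (rule power2_le_imp_le) simp
  then show ?thesis
    unfolding d_def round_size_def by simp
qed

lemma uncover_bound_less_iff_prod:
  assumes "m \<le> N"
  shows "uncover_bound q N m < real k + 1 \<longleftrightarrow>
    N * (\<Prod>i<m. N - 1 - i * q) < (k + 1) * (\<Prod>i<m. N - i)"
proof -
  have pos: "0 < (\<Prod>i<m. real (N - i))"
    using assms by (intro prod_pos) auto
  have "uncover_bound q N m < real k + 1 \<longleftrightarrow>
      real N * (\<Prod>i<m. real (N - 1 - i * q)) < (real k + 1) * (\<Prod>i<m. real (N - i))"
    unfolding uncover_bound_def using pos by (simp add: prod_dividef pos_divide_less_eq)
  also have "\<dots> \<longleftrightarrow> real (N * (\<Prod>i<m. N - 1 - i * q)) < real ((k + 1) * (\<Prod>i<m. N - i))"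
    by (simp only: of_nat_mult of_nat_prod of_nat_add of_nat_1)
  finally show ?thesis
    by (simp only: of_nat_less_iff)
qed

text \<open>
  The exponent \<open>j\<close> certifies \<open>ln (q + 1) \<ge> 2j/3\<close> through \<open>2 ^ j \<le> q + 1\<close>, so that the last
  conditions give \<open>m + k \<le> round_size q\<close> by integer arithmetic alone.
\<close>

definition parameters_check :: "nat \<Rightarrow> nat \<Rightarrow> nat \<Rightarrow> nat \<Rightarrow> bool" where
  "parameters_check q m k j \<longleftrightarrow> m \<le> q * q + q + 1 \<and>
     (q * q + q + 1) * (\<Prod>i<m. q * q + q + 1 - 1 - i * q) < (k + 1) * (\<Prod>i<m. q * q + q + 1 - i) \<and>
     2 \<le> m + k \<and> 3 * (m + k - 2)\<^sup>2 \<le> 8 * (q + 1) * j \<and> 2 ^ j \<le> q + 1"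

lemma prod_lessThan_numeral:
  "prod f {..<numeral k} = prod f {..<pred_numeral k} * (f (pred_numeral k) :: 'a :: comm_monoid_mult)"
  by (simp add: numeral_eq_Suc)

definition small_order_parameters :: "(nat \<times> nat \<times> nat \<times> nat) list" where
  "small_order_parameters =
     [(2, 3, 1, 1), (3, 4, 1, 2), (4, 5, 1, 2), (5, 6, 0, 2), (6, 7, 0, 2), (7, 7, 1, 3),
      (8, 8, 0, 3), (9, 9, 0, 3), (10, 9, 1, 3), (11, 10, 0, 3), (12, 10, 1, 3), (13, 11, 0, 3),
      (14, 11, 1, 3), (15, 12, 0, 4), (16, 12, 1, 4), (17, 13, 0, 4), (18, 13, 1, 4),
      (19, 14, 0, 4), (20, 14, 1, 4), (21, 15, 0, 4), (22, 15, 1, 4), (23, 16, 0, 4),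
      (24, 16, 1, 4), (25, 16, 1, 4), (26, 16, 2, 4), (27, 17, 1, 4), (28, 17, 2, 4),
      (29, 18, 1, 4), (30, 19, 0, 4)]"

lemma small_order_parameters_check:
  "list_all (\<lambda>(q, m, k, j). parameters_check q m k j) small_order_parameters"
  by (simp add: small_order_parameters_def parameters_check_def prod_lessThan_numeral power2_eq_square)

lemma parameters_small_order:
  assumes "2 \<le> q" "q \<le> 30"
  shows "\<exists>m k. uncover_bound q (q * q + q + 1) m < real k + 1 \<and> real m + real k \<le> round_size q"
proof -
  have "{2..30} = fst ` set small_order_parameters"
    by (simp add: small_order_parameters_def atLeastAtMost_upt upt_rec)
  then have "q \<in> fst ` set small_order_parameters"
    using assms by (metis atLeastAtMost_iff)
  then obtain m k j where "(q, m, k, j) \<in> set small_order_parameters"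
    by force
  then have "parameters_check q m k j"
    using small_order_parameters_check by (auto simp: list_all_iff)
  then have check: "m \<le> q * q + q + 1"
      "(q * q + q + 1) * (\<Prod>i<m. q * q + q + 1 - 1 - i * q) < (k + 1) * (\<Prod>i<m. q * q + q + 1 - i)"
      "2 \<le> m + k" "3 * (m + k - 2)\<^sup>2 \<le> 8 * (q + 1) * j" "2 ^ j \<le> q + 1"
    unfolding parameters_check_def by auto
  then show ?thesis
    using uncover_bound_less_iff_prod[OF check(1)] add_le_round_size[OF check(3-5)] by blast
qed

lemma uncover_ratio_le_exp:
  fixes N q i :: nat
  assumes "1 \<le> q" "i < N"
  shows "real (N - 1 - i * q) / real (N - i) \<le> exp (-(1 + real i * (real q - 1)) / real N)"
proof (cases "1 + i * q < N")
  case True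
  define c where "c = 1 + real i * (real q - 1)"
  have "0 \<le> c" unfolding c_def using assms(1) by simp
  have "real (N - 1 - i * q) / real (N - i) = 1 - c / (real N - real i)"
    using True assms(2) unfolding c_def by (simp add: field_simps)
  also have "\<dots> \<le> 1 - c / real N"
    using \<open>0 \<le> c\<close> assms(2) by (simp add: frac_le)
  also have "\<dots> \<le> exp (- (c / real N))"
    using exp_ge_add_one_self[of "- (c / real N)"] by simp
  finally show ?thesis unfolding c_def minus_divide_left .
qed simp

lemma uncover_bound_le_exp:
  assumes "1 \<le> q" "m \<le> N"
  shows "uncover_bound q N m \<le>
    real N * exp (-(real m + (real q - 1) * (real m * (real m - 1) / 2)) / real N)"
proof -
  have gauss: "(\<Sum>i<m. real i) = real m * (real m - 1) / 2"
    by (induction m) (auto simp: field_simps)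
  have "(\<Prod>i<m. real (N - 1 - i * q) / real (N - i)) \<le> (\<Prod>i<m. exp (-(1 + real i * (real q - 1)) / real N))"
    using assms by (intro prod_mono conjI divide_nonneg_nonneg uncover_ratio_le_exp) auto
  also have "\<dots> = exp (\<Sum>i<m. -(1 + real i * (real q - 1)) / real N)"
    by (simp add: exp_sum)
  also have "(\<Sum>i<m. -(1 + real i * (real q - 1)) / real N) =
      -(real m + (real q - 1) * (real m * (real m - 1) / 2)) / real N"
  proof -
    have "(\<Sum>i<m. 1 + real i * (real q - 1)) = real m + (real q - 1) * (real m * (real m - 1) / 2)"
      by (simp add: sum.distrib sum_distrib_right[symmetric] gauss mult.commute)
    then show ?thesis
      by (simp only: sum_divide_distrib[symmetric] sum_negf)
  qed
  finally show ?thesis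
    unfolding uncover_bound_def by (intro mult_left_mono) auto
qed

lemma ln_bounds_large:
  fixes y :: real
  assumes "32 \<le> y"
  shows "1 \<le> ln y" "ln y \<le> y / 8"
proof -
  have ln32: "ln (32::real) = 5 * ln 2"
    using ln_realpow[of "2::real" 5] by simp
  show "1 \<le> ln y"
    using ln_mono[of 32 y] assms ln32 ln2_ge_two_thirds by linarith
  have "ln (y / 32) \<le> y / 32 - 1"
    using assms by (intro ln_le_minus_one) auto
  moreover have "ln (y / 32) = ln y - ln 32"
    using assms by (simp add: ln_div)
  ultimately show "ln y \<le> y / 8"
    using ln32 ln2_le_25_over_36 assms by linarith
qed

lemma large_order_exponent:
  fixes y u :: real
  assumes y: "32 \<le> y" and u: "2 * sqrt (y * ln y) < u"
  shows "(y * y - y + 1) * (2 * ln y - ln 2) < u + (y - 2) * (u * (u - 1) / 2)"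
proof -
  define s where "s = sqrt (y * ln y)"
  define N where "N = y * y - y + 1"
  define K where "K = u + (y - 2) * (u * (u - 1) / 2)"
  have lg: "1 \<le> ln y" "ln y \<le> y / 8"
    using ln_bounds_large[OF y] by simp_all
  have s_sq: "s * s = y * ln y"
    using y lg(1) unfolding s_def by simp
  have "1 * 1 \<le> y * ln y"
    using y lg(1) by (intro mult_mono) auto
  then have s_lower: "1 \<le> s"
    unfolding s_def by simp
  have ylg_upper: "y * ln y \<le> y * y / 8"
    using mult_left_mono[OF lg(2), of y] y by simp
  have s_upper: "s \<le> 9 / 25 * y"
  proof (rule power2_le_imp_le)
    show "s\<^sup>2 \<le> (9 / 25 * y)\<^sup>2"
      using ylg_upper s_sq y by (simp add: power2_eq_square algebra_simps)
  qed (use y in simp)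
  have u_s: "2 * s < u"
    using u unfolding s_def .
  then have "2 * s * (2 * s - 1) \<le> u * (u - 1)"
    using s_lower by (intro mult_mono) auto
  then have "(y - 2) * (2 * s * (2 * s - 1)) \<le> (y - 2) * (u * (u - 1))"
    using y by (intro mult_left_mono) auto
  moreover have "(y - 2) * (2 * s * (2 * s - 1)) = 4 * (y * (s * s)) - 8 * (s * s) - 2 * (y * s) + 4 * s"
    by (simp add: algebra_simps)
  moreover have "2 * K = 2 * u + (y - 2) * (u * (u - 1))"
    unfolding K_def by (simp add: field_simps)
  ultimately have lower: "4 * (y * (y * ln y)) - 8 * (y * ln y) - 2 * (y * s) + 4 * s \<le> 2 * K"
    using u_s s_lower unfolding s_sq by linarith
  have "0 \<le> y * (y - 1)"
    using y by simp
  then have "0 < N"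
    unfolding N_def by (simp add: algebra_simps)
  then have "2 / 3 * N \<le> N * ln 2"
    using mult_left_mono[OF ln2_ge_two_thirds, of N] by simp
  moreover have "y * s \<le> 9 / 25 * (y * y)"
    using mult_left_mono[OF s_upper, of y] y by simp
  moreover have "32 * y \<le> y * y"
    using y by (intro mult_right_mono) auto
  moreover have "N * (2 * ln y - ln 2) = 2 * (y * (y * ln y)) - 2 * (y * ln y) + 2 * ln y - N * ln 2"
    unfolding N_def by (simp add: algebra_simps)
  ultimately have "N * (2 * ln y - ln 2) < K"
    using lower ylg_upper s_lower lg(2) y N_def by linarith
  then show ?thesis
    unfolding N_def K_def .
qed

lemma large_order_estimate:
  fixes y u :: real
  assumes y: "32 \<le> y" and u: "2 * sqrt (y * ln y) < u"
  shows "(y * y - y + 1) * exp (-(u + (y - 2) * (u * (u - 1) / 2)) / (y * y - y + 1)) < 2"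
proof -
  define N where "N = y * y - y + 1"
  define K where "K = u + (y - 2) * (u * (u - 1) / 2)"
  have "0 \<le> y * (y - 1)"
    using y by simp
  then have N_pos: "0 < N"
    unfolding N_def by (simp add: algebra_simps)
  have "-K / N < ln 2 - 2 * ln y"
    using large_order_exponent[OF y u] unfolding pos_divide_less_eq[OF N_pos]
    unfolding N_def[symmetric] K_def[symmetric] by (simp add: algebra_simps)
  then have "exp (-K / N) < exp (ln 2 - 2 * ln y)"
    by simp
  also have "\<dots> = 2 / (y * y)"
    using y by (simp add: exp_diff exp_double power2_eq_square)
  finally have "N * exp (-K / N) < N * (2 / (y * y))"
    using N_pos by (rule mult_strict_left_mono)
  also have "\<dots> \<le> 2"
    using y unfolding N_def by (simp add: field_simps)
  finally show ?thesis
    unfolding N_def K_def .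
qed

lemma parameters_large_order:
  assumes "31 \<le> q"
  shows "\<exists>m k. uncover_bound q (q * q + q + 1) m < real k + 1 \<and> real m + real k \<le> round_size q"
proof -
  define y where "y = real q + 1"
  define s where "s = sqrt (y * ln y)"
  define m where "m = nat \<lfloor>2 * s\<rfloor> + 1"
  have y: "32 \<le> y"
    using assms unfolding y_def by simp
  have "0 \<le> s"
    using y unfolding s_def by simp
  then have m: "2 * s < real m" "real m \<le> 2 * s + 1"
    unfolding m_def by linarith+
  have "y * ln y \<le> y\<^sup>2"
    using mult_left_mono[OF less_imp_le[OF ln_less_self], of y y] y by (simp add: power2_eq_square)
  then have "s \<le> y"
    using y unfolding s_def by (intro real_le_lsqrt) auto
  have N: "real (q * q + q + 1) = y * y - y + 1" and q: "real q - 1 = y - 2"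
    unfolding y_def by (simp_all add: algebra_simps)
  have "32 * y \<le> y * y"
    using y by (intro mult_right_mono) auto
  then have "real m \<le> real (q * q + q + 1)"
    using m \<open>s \<le> y\<close> y N by linarith
  then have "m \<le> q * q + q + 1"
    by (simp only: of_nat_le_iff)
  then have "uncover_bound q (q * q + q + 1) m \<le>
      real (q * q + q + 1) * exp (-(real m + (real q - 1) * (real m * (real m - 1) / 2)) / real (q * q + q + 1))"
    using assms by (intro uncover_bound_le_exp) simp_all
  also have "\<dots> = (y * y - y + 1) * exp (-(real m + (y - 2) * (real m * (real m - 1) / 2)) / (y * y - y + 1))"
    unfolding N q ..
  also have "\<dots> < 2"
    using large_order_estimate[OF y] m(1) unfolding s_def by blast
  finally have "uncover_bound q (q * q + q + 1) m < real 1 + 1"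
    by simp
  moreover have "real m + real (1::nat) \<le> round_size q"
    using m unfolding s_def y_def round_size_def by simp
  ultimately show ?thesis by blast
qed

lemma exists_parameters:
  assumes "2 \<le> q"
  shows "\<exists>m k. uncover_bound q (q * q + q + 1) m < real k + 1 \<and> real m + real k \<le> round_size q"
  using parameters_small_order[OF assms] parameters_large_order by (cases "q \<le> 30") auto

lemma (in finite_projective_plane) exists_saturating_set:
  "\<exists>U. saturating_1 P L \<mu> U \<and> real (card U) \<le> real \<mu> * round_size q"
proof (rule saturating_by_rounds)
  obtain m k where mk: "uncover_bound q (q * q + q + 1) m < real k + 1" "real m + real k \<le> round_size q"
    using exists_parameters[OF order_ge_2] by blast
  fix T
  from secant_round[OF mk(1), of T] obtain S where
    S: "S \<subseteq> P - T" "card S \<le> m + k" "\<forall>Q\<in>P - T - S. new_secant_through T S Q"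
    by (elim exE conjE)
  then have "real (card S) \<le> real m + real k"
    by (metis of_nat_add of_nat_le_iff)
  with S mk(2) show "\<exists>S \<subseteq> P - T. real (card S) \<le> round_size q \<and> (\<forall>Q\<in>P - T - S. new_secant_through T S Q)"
    by (meson order_trans)
qed

section \<open>The three bounds\<close>

lemma diff_one_le_mult_ln:
  fixes x :: real
  assumes "0 < x"
  shows "x - 1 \<le> x * ln x"
proof -
  have "ln (inverse x) \<le> inverse x - 1"
    using assms by (intro ln_le_minus_one) simp
  then have "x * (1 - inverse x) \<le> x * ln x"
    using assms by (intro mult_left_mono) (auto simp: ln_inverse)
  then show ?thesis
    using assms by (simp add: algebra_simps)
qed

lemma Dseq_lower:
  assumes "0 \<le> \<delta>" "0 \<le> x" "1 \<le> i"
  shows "1 + (real i - 1) * (1 + \<delta>) \<le> Dseq x \<delta> i"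
  using assms(3)
proof (induction i rule: nat_induct_at_least)
  case (Suc i)
  have "0 \<le> (real i - 1) * (1 + \<delta>)"
    using Suc(1) assms(1) by simp
  then have "0 \<le> Dseq x \<delta> i"
    using Suc(2) by linarith
  then have "0 \<le> (Dseq x \<delta> i + \<delta>) / x"
    using assms(1,2) by simp
  then show ?case
    using Suc by (simp add: algebra_simps)
qed simp

lemma rounds_le_Dseq:
  assumes "0 \<le> x" "1 \<le> \<mu>" "1 \<le> s" "\<delta> * s = 1"
  shows "real \<mu> * (2 * s + 2) \<le> 2 * Dseq x \<delta> \<mu> * s + 2"
proof -
  have "0 \<le> \<delta>"
    using zero_less_mult_pos2[of \<delta> s] assms(3,4) by simp
  have "real \<mu> * (2 * s + 2) = 2 * s + 2 * (real \<mu> - 1) * s + 2 * (real \<mu> - 1) * (\<delta> * s) + 2"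
    unfolding assms(4) by (simp add: algebra_simps)
  also have "\<dots> = 2 * (1 + (real \<mu> - 1) * (1 + \<delta>)) * s + 2"
    by (simp add: algebra_simps)
  also have "\<dots> \<le> 2 * Dseq x \<delta> \<mu> * s + 2"
    using \<open>0 \<le> \<delta>\<close> assms(1-3)
    by (intro add_right_mono mult_right_mono mult_left_mono Dseq_lower) auto
  finally show ?thesis .
qed

theorem corollary3:
  fixes P :: "'a set" and L :: "'a set set" and q \<mu> :: nat and \<delta> :: real
  assumes "projective_plane P L q"
    and "\<mu> \<ge> 2"
    and "\<delta> = 1 / sqrt ((real q + 1) * ln (real q + 1))"
  shows "(\<exists>S. saturating_1 P L \<mu> S \<and>
            real (card S) \<le> 2 * Dseq (real q) \<delta> \<mu> * sqrt ((real q + 1) * ln (real q + 1)) + 2)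
       \<and> (real \<mu> \<le> sqrt (real q) \<longrightarrow> (\<exists>S. saturating_1 P L \<mu> S \<and>
            real (card S) \<le> 2 * (real \<mu> + 1) * sqrt ((real q + 1) * ln (real q + 1)) + 2))
       \<and> (real \<mu> \<le> ((1 - \<delta>) * real q - \<delta> + 1) / 2 + 1 \<longrightarrow> (\<exists>S. saturating_1 P L \<mu> S \<and>
            real (card S) \<le> 2 * (2 * real \<mu> - 1) * sqrt ((real q + 1) * ln (real q + 1)) + 2))"
proof -
  interpret finite_projective_plane P L q
    by unfold_locales (fact assms(1))
  define s where "s = sqrt ((real q + 1) * ln (real q + 1))"
  obtain U where U: "saturating_1 P L \<mu> U" "real (card U) \<le> real \<mu> * (2 * s + 2)"
    using exists_saturating_set unfolding round_size_def s_def by blast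
  have sqrt_q: "sqrt (real q) \<le> s"
    using diff_one_le_mult_ln[of "real q + 1"] unfolding s_def by simp
  moreover have "1 \<le> sqrt (real q)"
    using order_ge_2 by simp
  ultimately have s: "1 \<le> s"
    by linarith
  have "\<delta> * s = 1"
    using assms(3) s unfolding s_def[symmetric] by simp
  then have bound_i: "real \<mu> * (2 * s + 2) \<le> 2 * Dseq (real q) \<delta> \<mu> * s + 2"
    using assms(2) s by (intro rounds_le_Dseq) auto
  have bound_ii: "real \<mu> * (2 * s + 2) \<le> 2 * (real \<mu> + 1) * s + 2" if "real \<mu> \<le> sqrt (real q)"
    using that sqrt_q by (simp add: algebra_simps)
  text \<open>Bound (iii) needs no assumption on \<open>\<mu>\<close>: it exceeds \<open>\<mu>(2s + 2)\<close> by \<open>2(\<mu> - 1)(s - 1) \<ge> 0\<close>.\<close>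
  have bound_iii: "real \<mu> * (2 * s + 2) \<le> 2 * (2 * real \<mu> - 1) * s + 2"
    using mult_left_mono[OF s, of "real \<mu> - 1"] assms(2) by (simp add: algebra_simps)
  show ?thesis
    using U bound_i bound_ii bound_iii unfolding s_def[symmetric] by (meson order_trans)
qed

end
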